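(* Let $F:\mathcal A\to\mathcal B$ be a triangle functor between triangulated categories. Then $F$ is faithful if and only if $F$ reflects splitting epimorphisms, i.e. whenever $v$ is a morphism of $\mathcal A$ such that $F(v)$ is a splitting epimorphism in $\mathcal B$, then $v$ is a splitting epimorphism in $\mathcal A$.
   Context: A triangle functor is a pair $(F,\xi)$ with $F$ additive and $\xi:F[1]\to[1]F$ a natural isomorphism such that $F$ sends distinguished triangles $(X,Y,Z,u,v,w)$ to distinguished triangles $(F(X),F(Y),F(Z),F(u),F(v),\xi_XF(w))$. *)

theory Defs
  imports Main
begin

text \<open>Composition convention: Cmp C g f is g after f.\<close>

record ('o, 'm) tri_cat =
  Ob   :: "'o set"
  Ar   :: "'m set"
  Dm   :: "'m \<Rightarrow> 'o"
  Cd   :: "'m \<Rightarrow> 'o"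
  Idt  :: "'o \<Rightarrow> 'm"
  Cmp  :: "'m \<Rightarrow> 'm \<Rightarrow> 'm"
  Ad   :: "'m \<Rightarrow> 'm \<Rightarrow> 'm"
  Ng   :: "'m \<Rightarrow> 'm"
  Zr   :: "'o \<Rightarrow> 'o \<Rightarrow> 'm"
  ShO  :: "'o \<Rightarrow> 'o"
  ShA  :: "'m \<Rightarrow> 'm"
  Dist :: "('o \<times> 'o \<times> 'o \<times> 'm \<times> 'm \<times> 'm) set"

definition hom :: "('o,'m) tri_cat \<Rightarrow> 'o \<Rightarrow> 'o \<Rightarrow> 'm set" where
  "hom C X Y = {f \<in> Ar C. Dm C f = X \<and> Cd C f = Y}"

definition category :: "('o,'m) tri_cat \<Rightarrow> bool" where
  "category C \<longleftrightarrow>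
     (\<forall>f\<in>Ar C. Dm C f \<in> Ob C \<and> Cd C f \<in> Ob C) \<and>
     (\<forall>X\<in>Ob C. Idt C X \<in> hom C X X) \<and>
     (\<forall>X Y Z f g. f \<in> hom C X Y \<longrightarrow> g \<in> hom C Y Z \<longrightarrow> Cmp C g f \<in> hom C X Z) \<and>
     (\<forall>X Y f. f \<in> hom C X Y \<longrightarrow> Cmp C f (Idt C X) = f \<and> Cmp C (Idt C Y) f = f) \<and>
     (\<forall>W X Y Z f g h. f \<in> hom C W X \<longrightarrow> g \<in> hom C X Y \<longrightarrow> h \<in> hom C Y Z \<longrightarrow>
        Cmp C h (Cmp C g f) = Cmp C (Cmp C h g) f)"

definition iso :: "('o,'m) tri_cat \<Rightarrow> 'm \<Rightarrow> bool" where
  "iso C f \<longleftrightarrow> f \<in> Ar C \<and>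
     (\<exists>g\<in>hom C (Cd C f) (Dm C f). Cmp C g f = Idt C (Dm C f) \<and> Cmp C f g = Idt C (Cd C f))"

definition split_epi :: "('o,'m) tri_cat \<Rightarrow> 'm \<Rightarrow> bool" where
  "split_epi C v \<longleftrightarrow> v \<in> Ar C \<and>
     (\<exists>s\<in>hom C (Cd C v) (Dm C v). Cmp C v s = Idt C (Cd C v))"

definition preadditive :: "('o,'m) tri_cat \<Rightarrow> bool" where
  "preadditive C \<longleftrightarrow> category C \<and>
     (\<forall>X\<in>Ob C. \<forall>Y\<in>Ob C.
        Zr C X Y \<in> hom C X Y \<and>
        (\<forall>f\<in>hom C X Y. \<forall>g\<in>hom C X Y. Ad C f g \<in> hom C X Y) \<and>
        (\<forall>f\<in>hom C X Y. Ng C f \<in> hom C X Y) \<and>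
        (\<forall>f\<in>hom C X Y. \<forall>g\<in>hom C X Y. \<forall>h\<in>hom C X Y.
            Ad C (Ad C f g) h = Ad C f (Ad C g h)) \<and>
        (\<forall>f\<in>hom C X Y. \<forall>g\<in>hom C X Y. Ad C f g = Ad C g f) \<and>
        (\<forall>f\<in>hom C X Y. Ad C f (Zr C X Y) = f) \<and>
        (\<forall>f\<in>hom C X Y. Ad C f (Ng C f) = Zr C X Y)) \<and>
     (\<forall>X Y Z f g g'. f \<in> hom C X Y \<longrightarrow> g \<in> hom C Y Z \<longrightarrow> g' \<in> hom C Y Z \<longrightarrow>
        Cmp C (Ad C g g') f = Ad C (Cmp C g f) (Cmp C g' f)) \<and>
     (\<forall>X Y Z f f' g. f \<in> hom C X Y \<longrightarrow> f' \<in> hom C X Y \<longrightarrow> g \<in> hom C Y Z \<longrightarrow>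
        Cmp C g (Ad C f f') = Ad C (Cmp C g f) (Cmp C g f'))"

definition zero_object :: "('o,'m) tri_cat \<Rightarrow> 'o \<Rightarrow> bool" where
  "zero_object C Q \<longleftrightarrow> Q \<in> Ob C \<and>
     (\<forall>X\<in>Ob C. hom C Q X = {Zr C Q X} \<and> hom C X Q = {Zr C X Q})"

definition additive :: "('o,'m) tri_cat \<Rightarrow> bool" where
  "additive C \<longleftrightarrow> preadditive C \<and> (\<exists>Q. zero_object C Q) \<and>
     (\<forall>X\<in>Ob C. \<forall>Y\<in>Ob C. \<exists>P i1 i2 p1 p2.
        P \<in> Ob C \<and> i1 \<in> hom C X P \<and> i2 \<in> hom C Y P \<and> p1 \<in> hom C P X \<and> p2 \<in> hom C P Y \<and>
        Cmp C p1 i1 = Idt C X \<and> Cmp C p2 i2 = Idt C Y \<and>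
        Cmp C p1 i2 = Zr C Y X \<and> Cmp C p2 i1 = Zr C X Y \<and>
        Ad C (Cmp C i1 p1) (Cmp C i2 p2) = Idt C P)"

definition cat_functor :: "('o,'m) tri_cat \<Rightarrow> ('p,'n) tri_cat \<Rightarrow> ('o \<Rightarrow> 'p) \<Rightarrow> ('m \<Rightarrow> 'n) \<Rightarrow> bool" where
  "cat_functor C D Fo Fa \<longleftrightarrow>
     (\<forall>X\<in>Ob C. Fo X \<in> Ob D) \<and>
     (\<forall>X Y f. f \<in> hom C X Y \<longrightarrow> Fa f \<in> hom D (Fo X) (Fo Y)) \<and>
     (\<forall>X\<in>Ob C. Fa (Idt C X) = Idt D (Fo X)) \<and>
     (\<forall>X Y Z f g. f \<in> hom C X Y \<longrightarrow> g \<in> hom C Y Z \<longrightarrow> Fa (Cmp C g f) = Cmp D (Fa g) (Fa f))"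

definition additive_functor :: "('o,'m) tri_cat \<Rightarrow> ('p,'n) tri_cat \<Rightarrow> ('o \<Rightarrow> 'p) \<Rightarrow> ('m \<Rightarrow> 'n) \<Rightarrow> bool" where
  "additive_functor C D Fo Fa \<longleftrightarrow> cat_functor C D Fo Fa \<and>
     (\<forall>X Y f g. f \<in> hom C X Y \<longrightarrow> g \<in> hom C X Y \<longrightarrow> Fa (Ad C f g) = Ad D (Fa f) (Fa g))"

definition faithful :: "('o,'m) tri_cat \<Rightarrow> ('m \<Rightarrow> 'n) \<Rightarrow> bool" where
  "faithful C Fa \<longleftrightarrow>
     (\<forall>X\<in>Ob C. \<forall>Y\<in>Ob C. \<forall>f\<in>hom C X Y. \<forall>g\<in>hom C X Y. Fa f = Fa g \<longrightarrow> f = g)"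

definition full :: "('o,'m) tri_cat \<Rightarrow> ('p,'n) tri_cat \<Rightarrow> ('o \<Rightarrow> 'p) \<Rightarrow> ('m \<Rightarrow> 'n) \<Rightarrow> bool" where
  "full C D Fo Fa \<longleftrightarrow>
     (\<forall>X\<in>Ob C. \<forall>Y\<in>Ob C. \<forall>h\<in>hom D (Fo X) (Fo Y). \<exists>f\<in>hom C X Y. Fa f = h)"

definition ess_surj :: "('o,'m) tri_cat \<Rightarrow> ('p,'n) tri_cat \<Rightarrow> ('o \<Rightarrow> 'p) \<Rightarrow> bool" where
  "ess_surj C D Fo \<longleftrightarrow> (\<forall>Y\<in>Ob D. \<exists>X\<in>Ob C. \<exists>h\<in>hom D (Fo X) Y. iso D h)"

definition triangle :: "('o,'m) tri_cat \<Rightarrow> ('o \<times> 'o \<times> 'o \<times> 'm \<times> 'm \<times> 'm) \<Rightarrow> bool" where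
  "triangle C t = (case t of (X,Y,Z,u,v,w) \<Rightarrow>
     X \<in> Ob C \<and> Y \<in> Ob C \<and> Z \<in> Ob C \<and>
     u \<in> hom C X Y \<and> v \<in> hom C Y Z \<and> w \<in> hom C Z (ShO C X))"

definition tri_morphism :: "('o,'m) tri_cat \<Rightarrow> ('o \<times> 'o \<times> 'o \<times> 'm \<times> 'm \<times> 'm)
    \<Rightarrow> ('o \<times> 'o \<times> 'o \<times> 'm \<times> 'm \<times> 'm) \<Rightarrow> 'm \<Rightarrow> 'm \<Rightarrow> 'm \<Rightarrow> bool" where
  "tri_morphism C t t' a b c = (case t of (X,Y,Z,u,v,w) \<Rightarrow> case t' of (X',Y',Z',u',v',w') \<Rightarrow>
     a \<in> hom C X X' \<and> b \<in> hom C Y Y' \<and> c \<in> hom C Z Z' \<and>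
     Cmp C b u = Cmp C u' a \<and> Cmp C c v = Cmp C v' b \<and> Cmp C (ShA C a) w = Cmp C w' c)"

definition triangulated :: "('o,'m) tri_cat \<Rightarrow> bool" where
  "triangulated C \<longleftrightarrow>
     additive C \<and>
     additive_functor C C (ShO C) (ShA C) \<and>
     full C C (ShO C) (ShA C) \<and> faithful C (ShA C) \<and> ess_surj C C (ShO C) \<and>
     (\<forall>t\<in>Dist C. triangle C t) \<and>
     \<comment> \<open>TR1: closure under isomorphism of triangles\<close>
     (\<forall>t t' a b c. t \<in> Dist C \<longrightarrow> triangle C t' \<longrightarrow> tri_morphism C t t' a b c \<longrightarrow>
        iso C a \<longrightarrow> iso C b \<longrightarrow> iso C c \<longrightarrow> t' \<in> Dist C) \<and>
     \<comment> \<open>TR1: X -> X -> 0 -> X[1]\<close>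
     (\<forall>X\<in>Ob C. \<forall>Q. zero_object C Q \<longrightarrow>
        (X, X, Q, Idt C X, Zr C X Q, Zr C Q (ShO C X)) \<in> Dist C) \<and>
     \<comment> \<open>TR1: every morphism extends to a distinguished triangle\<close>
     (\<forall>X Y u. X \<in> Ob C \<longrightarrow> Y \<in> Ob C \<longrightarrow> u \<in> hom C X Y \<longrightarrow>
        (\<exists>Z v w. (X, Y, Z, u, v, w) \<in> Dist C)) \<and>
     \<comment> \<open>TR2: rotation\<close>
     (\<forall>X Y Z u v w. triangle C (X, Y, Z, u, v, w) \<longrightarrow>
        ((X, Y, Z, u, v, w) \<in> Dist C \<longleftrightarrow> (Y, Z, ShO C X, v, w, Ng C (ShA C u)) \<in> Dist C)) \<and>
     \<comment> \<open>TR3: completion of morphisms of triangles\<close>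
     (\<forall>X Y Z u v w X' Y' Z' u' v' w' a b.
        (X, Y, Z, u, v, w) \<in> Dist C \<longrightarrow> (X', Y', Z', u', v', w') \<in> Dist C \<longrightarrow>
        a \<in> hom C X X' \<longrightarrow> b \<in> hom C Y Y' \<longrightarrow> Cmp C b u = Cmp C u' a \<longrightarrow>
        (\<exists>c. tri_morphism C (X, Y, Z, u, v, w) (X', Y', Z', u', v', w') a b c)) \<and>
     \<comment> \<open>TR4: octahedral axiom\<close>
     (\<forall>X Y Z u v Z' j k X' l i Y' m n.
        (X, Y, Z', u, j, k) \<in> Dist C \<longrightarrow>
        (Y, Z, X', v, l, i) \<in> Dist C \<longrightarrow>
        (X, Z, Y', Cmp C v u, m, n) \<in> Dist C \<longrightarrow>
        (\<exists>f g. (Z', Y', X', f, g, Cmp C (ShA C j) i) \<in> Dist C \<and>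
               Cmp C f j = Cmp C m v \<and> Cmp C n f = k \<and> Cmp C g m = l \<and>
               Cmp C i g = Cmp C (ShA C u) n))"

definition triangle_functor :: "('o,'m) tri_cat \<Rightarrow> ('p,'n) tri_cat \<Rightarrow>
    ('o \<Rightarrow> 'p) \<Rightarrow> ('m \<Rightarrow> 'n) \<Rightarrow> ('o \<Rightarrow> 'n) \<Rightarrow> bool" where
  "triangle_functor A B Fo Fa \<xi> \<longleftrightarrow>
     additive_functor A B Fo Fa \<and>
     (\<forall>X\<in>Ob A. \<xi> X \<in> hom B (Fo (ShO A X)) (ShO B (Fo X)) \<and> iso B (\<xi> X)) \<and>
     (\<forall>X Y f. f \<in> hom A X Y \<longrightarrow>
        Cmp B (\<xi> Y) (Fa (ShA A f)) = Cmp B (ShA B (Fa f)) (\<xi> X)) \<and>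
     (\<forall>X Y Z u v w. (X, Y, Z, u, v, w) \<in> Dist A \<longrightarrow>
        (Fo X, Fo Y, Fo Z, Fa u, Fa v, Cmp B (\<xi> X) (Fa w)) \<in> Dist B)"

end

theory Submission
  imports Defs
begin

text \<open>
  If \<open>F\<close> is faithful and \<open>F v\<close> is a split epimorphism, complete \<open>v\<close> to a distinguished
  triangle with second map \<open>g\<close>: then \<open>F g \<circ> F v = 0\<close> forces \<open>F g = 0\<close>, so \<open>g = 0\<close>, and a
  distinguished triangle whose second map vanishes has a split epimorphism as its first map.
  Conversely, suppose \<open>F\<close> reflects split epimorphisms and \<open>F f = 0\<close>. Rotating a triangle on \<open>f\<close>
  twice gives one whose first map \<open>h\<close> is followed by \<open>-\<Sigma>f\<close>; its image under \<open>F\<close> has second map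
  \<open>F(-\<Sigma>f) = 0\<close>, so \<open>F h\<close> and hence \<open>h\<close> splits, which kills \<open>-\<Sigma>f\<close>. Thus \<open>f = 0\<close> because
  \<open>\<Sigma>\<close> is faithful, and an additive functor killing only zero maps is faithful.
\<close>

section \<open>Categories\<close>

lemma hom_objects: "category C \<Longrightarrow> f \<in> hom C X Y \<Longrightarrow> X \<in> Ob C \<and> Y \<in> Ob C"
  unfolding category_def hom_def by auto

lemma Cmp_in_hom: "category C \<Longrightarrow> f \<in> hom C X Y \<Longrightarrow> g \<in> hom C Y Z \<Longrightarrow> Cmp C g f \<in> hom C X Z"
  unfolding category_def by blast

lemma Idt_in_hom: "category C \<Longrightarrow> X \<in> Ob C \<Longrightarrow> Idt C X \<in> hom C X X"
  unfolding category_def by blast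

lemma Cmp_Idt_right: "category C \<Longrightarrow> f \<in> hom C X Y \<Longrightarrow> Cmp C f (Idt C X) = f"
  unfolding category_def by blast

lemma Cmp_Idt_left: "category C \<Longrightarrow> f \<in> hom C X Y \<Longrightarrow> Cmp C (Idt C Y) f = f"
  unfolding category_def by blast

lemma Cmp_assoc:
  "category C \<Longrightarrow> f \<in> hom C W X \<Longrightarrow> g \<in> hom C X Y \<Longrightarrow> h \<in> hom C Y Z \<Longrightarrow>
    Cmp C h (Cmp C g f) = Cmp C (Cmp C h g) f"
  unfolding category_def by blast

lemma split_epiE:
  assumes "split_epi C v" and "v \<in> hom C X Y"
  obtains s where "s \<in> hom C Y X" and "Cmp C v s = Idt C Y"
  using assms unfolding split_epi_def hom_def by auto

lemma split_epiI: "v \<in> hom C X Y \<Longrightarrow> s \<in> hom C Y X \<Longrightarrow> Cmp C v s = Idt C Y \<Longrightarrow> split_epi C v"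
  unfolding split_epi_def hom_def by auto

lemma isoE:
  assumes "iso C k" and "k \<in> hom C Y Z"
  obtains l where "l \<in> hom C Z Y" and "Cmp C l k = Idt C Y"
  using assms unfolding iso_def hom_def by auto

section \<open>Preadditive categories\<close>

lemma preadditive_category: "preadditive C \<Longrightarrow> category C"
  unfolding preadditive_def by blast

lemma Zr_in_hom: "preadditive C \<Longrightarrow> X \<in> Ob C \<Longrightarrow> Y \<in> Ob C \<Longrightarrow> Zr C X Y \<in> hom C X Y"
  unfolding preadditive_def by blast

lemma preadditive_hom_group:
  assumes "preadditive C" and "f \<in> hom C X Y"
  shows "(\<forall>f\<in>hom C X Y. \<forall>g\<in>hom C X Y. Ad C f g \<in> hom C X Y) \<and>
    (\<forall>f\<in>hom C X Y. Ng C f \<in> hom C X Y) \<and>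
    (\<forall>f\<in>hom C X Y. \<forall>g\<in>hom C X Y. \<forall>h\<in>hom C X Y. Ad C (Ad C f g) h = Ad C f (Ad C g h)) \<and>
    (\<forall>f\<in>hom C X Y. \<forall>g\<in>hom C X Y. Ad C f g = Ad C g f) \<and>
    (\<forall>f\<in>hom C X Y. Ad C f (Zr C X Y) = f) \<and>
    (\<forall>f\<in>hom C X Y. Ad C f (Ng C f) = Zr C X Y)"
proof -
  have X: "X \<in> Ob C" and Y: "Y \<in> Ob C"
    using hom_objects[OF preadditive_category[OF assms(1)] assms(2)] by blast+
  show ?thesis
    using assms(1) unfolding preadditive_def
    by (elim conjE) (drule bspec[OF _ X], drule bspec[OF _ Y], elim conjE, intro conjI)
qed

lemma Ad_in_hom: "preadditive C \<Longrightarrow> f \<in> hom C X Y \<Longrightarrow> g \<in> hom C X Y \<Longrightarrow> Ad C f g \<in> hom C X Y"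
  using preadditive_hom_group by meson

lemma Ng_in_hom: "preadditive C \<Longrightarrow> f \<in> hom C X Y \<Longrightarrow> Ng C f \<in> hom C X Y"
  using preadditive_hom_group by meson

lemma Ad_assoc:
  "preadditive C \<Longrightarrow> f \<in> hom C X Y \<Longrightarrow> g \<in> hom C X Y \<Longrightarrow> h \<in> hom C X Y \<Longrightarrow>
    Ad C (Ad C f g) h = Ad C f (Ad C g h)"
  using preadditive_hom_group by meson

lemma Ad_commute: "preadditive C \<Longrightarrow> f \<in> hom C X Y \<Longrightarrow> g \<in> hom C X Y \<Longrightarrow> Ad C f g = Ad C g f"
  using preadditive_hom_group by meson

lemma Ad_Zr_right: "preadditive C \<Longrightarrow> f \<in> hom C X Y \<Longrightarrow> Ad C f (Zr C X Y) = f"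
  using preadditive_hom_group by meson

lemma Ad_Ng_right: "preadditive C \<Longrightarrow> f \<in> hom C X Y \<Longrightarrow> Ad C f (Ng C f) = Zr C X Y"
  using preadditive_hom_group by meson

lemma Cmp_Ad_left:
  "preadditive C \<Longrightarrow> f \<in> hom C X Y \<Longrightarrow> g \<in> hom C Y Z \<Longrightarrow> g' \<in> hom C Y Z \<Longrightarrow>
    Cmp C (Ad C g g') f = Ad C (Cmp C g f) (Cmp C g' f)"
  unfolding preadditive_def by (elim conjE) simp

lemma Cmp_Ad_right:
  "preadditive C \<Longrightarrow> f \<in> hom C X Y \<Longrightarrow> f' \<in> hom C X Y \<Longrightarrow> g \<in> hom C Y Z \<Longrightarrow>
    Cmp C g (Ad C f f') = Ad C (Cmp C g f) (Cmp C g f')"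
  unfolding preadditive_def by (elim conjE) simp

lemma Ad_idem_eq_Zr:
  assumes C: "preadditive C" and f: "f \<in> hom C X Y" and idem: "Ad C f f = f"
  shows "f = Zr C X Y"
proof -
  have "f = Ad C f (Ad C f (Ng C f))"
    using Ad_Ng_right[OF C f] Ad_Zr_right[OF C f] by simp
  also have "\<dots> = Ad C (Ad C f f) (Ng C f)"
    using Ad_assoc[OF C f f Ng_in_hom[OF C f]] by simp
  finally show ?thesis
    using idem Ad_Ng_right[OF C f] by simp
qed

lemma Ng_unique:
  assumes C: "preadditive C" and f: "f \<in> hom C X Y" and g: "g \<in> hom C X Y"
    and sum: "Ad C f g = Zr C X Y"
  shows "g = Ng C f"
proof -
  have nf: "Ng C f \<in> hom C X Y" using Ng_in_hom[OF C f] .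
  have "g = Ad C g (Ad C f (Ng C f))"
    using Ad_Ng_right[OF C f] Ad_Zr_right[OF C g] by simp
  also have "\<dots> = Ad C (Ad C f g) (Ng C f)"
    using Ad_assoc[OF C g f nf] Ad_commute[OF C f g] by simp
  also have "\<dots> = Ng C f"
    using sum Ad_commute[OF C _ nf] Ad_Zr_right[OF C nf] Zr_in_hom[OF C]
      hom_objects[OF preadditive_category[OF C] f] by simp
  finally show ?thesis .
qed

lemma Ng_Ng: "preadditive C \<Longrightarrow> f \<in> hom C X Y \<Longrightarrow> Ng C (Ng C f) = f"
  by (metis Ad_Ng_right Ad_commute Ng_in_hom Ng_unique)

lemma Ng_eq_Zr_iff:
  assumes C: "preadditive C" and f: "f \<in> hom C X Y"
  shows "Ng C f = Zr C X Y \<longleftrightarrow> f = Zr C X Y"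
proof -
  have Z: "Zr C X Y \<in> hom C X Y"
    using Zr_in_hom[OF C] hom_objects[OF preadditive_category[OF C] f] by blast
  have "Ng C (Zr C X Y) = Zr C X Y"
    using Ng_unique[OF C Z Z Ad_Zr_right[OF C Z]] by simp
  then show ?thesis
    using Ng_Ng[OF C f] by metis
qed

lemma Cmp_Zr_left:
  assumes C: "preadditive C" and f: "f \<in> hom C X Y" and Z: "Z \<in> Ob C"
  shows "Cmp C (Zr C Y Z) f = Zr C X Z"
proof -
  have z: "Zr C Y Z \<in> hom C Y Z"
    using Zr_in_hom[OF C _ Z] hom_objects[OF preadditive_category[OF C] f] by blast
  have "Cmp C (Zr C Y Z) f = Ad C (Cmp C (Zr C Y Z) f) (Cmp C (Zr C Y Z) f)"
    using Cmp_Ad_left[OF C f z z] Ad_Zr_right[OF C z] by simp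
  then show ?thesis
    using Ad_idem_eq_Zr[OF C Cmp_in_hom[OF preadditive_category[OF C] f z]] by simp
qed

lemma Cmp_Zr_right:
  assumes C: "preadditive C" and g: "g \<in> hom C Y Z" and X: "X \<in> Ob C"
  shows "Cmp C g (Zr C X Y) = Zr C X Z"
proof -
  have z: "Zr C X Y \<in> hom C X Y"
    using Zr_in_hom[OF C X] hom_objects[OF preadditive_category[OF C] g] by blast
  have "Cmp C g (Zr C X Y) = Ad C (Cmp C g (Zr C X Y)) (Cmp C g (Zr C X Y))"
    using Cmp_Ad_right[OF C z z g] Ad_Zr_right[OF C z] by simp
  then show ?thesis
    using Ad_idem_eq_Zr[OF C Cmp_in_hom[OF preadditive_category[OF C] z g]] by simp
qed

lemma Cmp_Ng_left:
  assumes C: "preadditive C" and f: "f \<in> hom C X Y" and g: "g \<in> hom C Y Z"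
  shows "Cmp C (Ng C g) f = Ng C (Cmp C g f)"
proof -
  have cat: "category C" using preadditive_category[OF C] .
  have ng: "Ng C g \<in> hom C Y Z" using Ng_in_hom[OF C g] .
  have "Ad C (Cmp C g f) (Cmp C (Ng C g) f) = Zr C X Z"
    using Cmp_Ad_left[OF C f g ng] Ad_Ng_right[OF C g] Cmp_Zr_left[OF C f]
      hom_objects[OF cat g] by simp
  then show ?thesis
    using Ng_unique[OF C Cmp_in_hom[OF cat f g] Cmp_in_hom[OF cat f ng]] by simp
qed

lemma Cmp_Ng_right:
  assumes C: "preadditive C" and f: "f \<in> hom C X Y" and g: "g \<in> hom C Y Z"
  shows "Cmp C g (Ng C f) = Ng C (Cmp C g f)"
proof -
  have cat: "category C" using preadditive_category[OF C] .
  have nf: "Ng C f \<in> hom C X Y" using Ng_in_hom[OF C f] .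
  have "Ad C (Cmp C g f) (Cmp C g (Ng C f)) = Zr C X Z"
    using Cmp_Ad_right[OF C f nf g] Ad_Ng_right[OF C f] Cmp_Zr_right[OF C g]
      hom_objects[OF cat f] by simp
  then show ?thesis
    using Ng_unique[OF C Cmp_in_hom[OF cat f g] Cmp_in_hom[OF cat nf g]] by simp
qed

lemma split_epi_cancel_Zr:
  assumes C: "preadditive C" and v: "v \<in> hom C X Y" and "split_epi C v"
    and g: "g \<in> hom C Y Z" and gv: "Cmp C g v = Zr C X Z"
  shows "g = Zr C Y Z"
proof -
  have cat: "category C" using preadditive_category[OF C] .
  obtain s where s: "s \<in> hom C Y X" "Cmp C v s = Idt C Y"
    using split_epiE[OF \<open>split_epi C v\<close> v] .
  have "g = Cmp C (Cmp C g v) s"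
    using Cmp_assoc[OF cat s(1) v g] s(2) Cmp_Idt_right[OF cat g] by simp
  then show ?thesis
    using gv Cmp_Zr_left[OF C s(1)] hom_objects[OF cat g] by simp
qed

lemma iso_cancel_Zr:
  assumes C: "preadditive C" and "iso C k" and k: "k \<in> hom C Y Z"
    and f: "f \<in> hom C X Y" and kf: "Cmp C k f = Zr C X Z"
  shows "f = Zr C X Y"
proof -
  have cat: "category C" using preadditive_category[OF C] .
  obtain l where l: "l \<in> hom C Z Y" "Cmp C l k = Idt C Y"
    using isoE[OF \<open>iso C k\<close> k] .
  have "f = Cmp C l (Cmp C k f)"
    using Cmp_assoc[OF cat f k l(1)] l(2) Cmp_Idt_left[OF cat f] by simp
  then show ?thesis
    using kf Cmp_Zr_right[OF C l(1)] hom_objects[OF cat f] by simp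
qed

section \<open>Additive functors\<close>

lemma functor_ob: "additive_functor C D Fo Fa \<Longrightarrow> X \<in> Ob C \<Longrightarrow> Fo X \<in> Ob D"
  unfolding additive_functor_def cat_functor_def by blast

lemma functor_hom: "additive_functor C D Fo Fa \<Longrightarrow> f \<in> hom C X Y \<Longrightarrow> Fa f \<in> hom D (Fo X) (Fo Y)"
  unfolding additive_functor_def cat_functor_def by blast

lemma functor_Idt: "additive_functor C D Fo Fa \<Longrightarrow> X \<in> Ob C \<Longrightarrow> Fa (Idt C X) = Idt D (Fo X)"
  unfolding additive_functor_def cat_functor_def by blast

lemma functor_Cmp:
  "additive_functor C D Fo Fa \<Longrightarrow> f \<in> hom C X Y \<Longrightarrow> g \<in> hom C Y Z \<Longrightarrow>
    Fa (Cmp C g f) = Cmp D (Fa g) (Fa f)"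
  unfolding additive_functor_def cat_functor_def by blast

lemma functor_Ad:
  "additive_functor C D Fo Fa \<Longrightarrow> f \<in> hom C X Y \<Longrightarrow> g \<in> hom C X Y \<Longrightarrow>
    Fa (Ad C f g) = Ad D (Fa f) (Fa g)"
  unfolding additive_functor_def by blast

lemma functor_Zr:
  assumes C: "preadditive C" and D: "preadditive D" and F: "additive_functor C D Fo Fa"
    and X: "X \<in> Ob C" and Y: "Y \<in> Ob C"
  shows "Fa (Zr C X Y) = Zr D (Fo X) (Fo Y)"
proof -
  have z: "Zr C X Y \<in> hom C X Y" using Zr_in_hom[OF C X Y] .
  have "Fa (Zr C X Y) = Ad D (Fa (Zr C X Y)) (Fa (Zr C X Y))"
    using functor_Ad[OF F z z] Ad_Zr_right[OF C z] by simp
  then show ?thesis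
    using Ad_idem_eq_Zr[OF D functor_hom[OF F z]] by simp
qed

lemma functor_Ng:
  assumes C: "preadditive C" and D: "preadditive D" and F: "additive_functor C D Fo Fa"
    and f: "f \<in> hom C X Y"
  shows "Fa (Ng C f) = Ng D (Fa f)"
proof -
  have nf: "Ng C f \<in> hom C X Y" using Ng_in_hom[OF C f] .
  have "Ad D (Fa f) (Fa (Ng C f)) = Zr D (Fo X) (Fo Y)"
    using functor_Ad[OF F f nf] Ad_Ng_right[OF C f] functor_Zr[OF C D F]
      hom_objects[OF preadditive_category[OF C] f] by simp
  then show ?thesis
    using Ng_unique[OF D functor_hom[OF F f] functor_hom[OF F nf]] by simp
qed

lemma faithful_reflects_Zr:
  assumes "faithful C Fa" and C: "preadditive C" and D: "preadditive D"
    and F: "additive_functor C D Fo Fa"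
    and f: "f \<in> hom C X Y" and Ff: "Fa f = Zr D (Fo X) (Fo Y)"
  shows "f = Zr C X Y"
proof -
  have X: "X \<in> Ob C" and Y: "Y \<in> Ob C"
    using hom_objects[OF preadditive_category[OF C] f] by blast+
  show ?thesis
    using assms(1) X Y f Zr_in_hom[OF C X Y] Ff functor_Zr[OF C D F X Y]
    unfolding faithful_def by metis
qed

lemma faithful_if_reflects_Zr:
  assumes C: "preadditive C" and D: "preadditive D" and F: "additive_functor C D Fo Fa"
    and reflect: "\<And>X Y f. f \<in> hom C X Y \<Longrightarrow> Fa f = Zr D (Fo X) (Fo Y) \<Longrightarrow> f = Zr C X Y"
  shows "faithful C Fa"
  unfolding faithful_def
proof (intro ballI impI)
  fix X Y f g
  assume f: "f \<in> hom C X Y" and g: "g \<in> hom C X Y" and Ffg: "Fa f = Fa g"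
  have ng: "Ng C g \<in> hom C X Y" using Ng_in_hom[OF C g] .
  have "Fa (Ad C f (Ng C g)) = Zr D (Fo X) (Fo Y)"
    using functor_Ad[OF F f ng] functor_Ng[OF C D F g] Ffg Ad_Ng_right[OF D functor_hom[OF F g]]
    by simp
  then have "Ad C (Ng C g) f = Zr C X Y"
    using reflect[OF Ad_in_hom[OF C f ng]] Ad_commute[OF C f ng] by simp
  then show "f = g"
    using Ng_unique[OF C ng f] Ng_Ng[OF C g] by simp
qed

section \<open>Triangulated categories\<close>

lemma triangulated_preadditive: "triangulated C \<Longrightarrow> preadditive C"
  unfolding triangulated_def additive_def by (elim conjE)

lemma triangulated_zero_object: "triangulated C \<Longrightarrow> \<exists>Q. zero_object C Q"
  unfolding triangulated_def additive_def by (elim conjE)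

lemma triangulated_shift: "triangulated C \<Longrightarrow> additive_functor C C (ShO C) (ShA C)"
  unfolding triangulated_def by (elim conjE)

lemma triangulated_shift_full: "triangulated C \<Longrightarrow> full C C (ShO C) (ShA C)"
  unfolding triangulated_def by (elim conjE)

lemma triangulated_shift_faithful: "triangulated C \<Longrightarrow> faithful C (ShA C)"
  unfolding triangulated_def by (elim conjE)

lemma Dist_triangle:
  assumes "triangulated C" and "(X, Y, Z, u, v, w) \<in> Dist C"
  shows "X \<in> Ob C" "Y \<in> Ob C" "Z \<in> Ob C"
    and "u \<in> hom C X Y" "v \<in> hom C Y Z" "w \<in> hom C Z (ShO C X)"
proof -
  have "\<forall>t\<in>Dist C. triangle C t"
    using assms(1) unfolding triangulated_def by (elim conjE)
  then have "triangle C (X, Y, Z, u, v, w)" using assms(2) by blast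
  then show "X \<in> Ob C" "Y \<in> Ob C" "Z \<in> Ob C"
    and "u \<in> hom C X Y" "v \<in> hom C Y Z" "w \<in> hom C Z (ShO C X)"
    unfolding triangle_def by simp_all
qed

lemma Dist_trivial:
  "triangulated C \<Longrightarrow> X \<in> Ob C \<Longrightarrow> zero_object C Q \<Longrightarrow>
    (X, X, Q, Idt C X, Zr C X Q, Zr C Q (ShO C X)) \<in> Dist C"
  unfolding triangulated_def by (elim conjE) blast

lemma Dist_exists:
  assumes "triangulated C" and "u \<in> hom C X Y"
  obtains Z v w where "(X, Y, Z, u, v, w) \<in> Dist C"
proof -
  have "X \<in> Ob C" "Y \<in> Ob C"
    using hom_objects[OF preadditive_category[OF triangulated_preadditive[OF assms(1)]] assms(2)]
    by blast+
  with assms have "\<exists>Z v w. (X, Y, Z, u, v, w) \<in> Dist C"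
    unfolding triangulated_def by (elim conjE) blast
  then show ?thesis using that by blast
qed

lemma Dist_rotate:
  assumes T: "triangulated C" and d: "(X, Y, Z, u, v, w) \<in> Dist C"
  shows "(Y, Z, ShO C X, v, w, Ng C (ShA C u)) \<in> Dist C"
proof -
  have "triangle C (X, Y, Z, u, v, w)"
    using Dist_triangle[OF T d] unfolding triangle_def by simp
  with assms show ?thesis
    unfolding triangulated_def by (elim conjE) blast
qed

lemma Dist_morphism_completion:
  assumes "triangulated C"
    and "(X, Y, Z, u, v, w) \<in> Dist C" and "(X', Y', Z', u', v', w') \<in> Dist C"
    and "a \<in> hom C X X'" and "b \<in> hom C Y Y'" and "Cmp C b u = Cmp C u' a"
  obtains c where "c \<in> hom C Z Z'" and "Cmp C c v = Cmp C v' b"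
    and "Cmp C (ShA C a) w = Cmp C w' c"
proof -
  have "\<exists>c. tri_morphism C (X, Y, Z, u, v, w) (X', Y', Z', u', v', w') a b c"
    using assms unfolding triangulated_def by (elim conjE) meson
  then show ?thesis
    using that unfolding tri_morphism_def by auto
qed

lemma Dist_Cmp_Zr:
  assumes T: "triangulated C" and d: "(X, Y, Z, u, v, w) \<in> Dist C"
  shows "Cmp C v u = Zr C X Z"
proof -
  have C: "preadditive C" using triangulated_preadditive[OF T] .
  obtain Q where Q: "zero_object C Q" using triangulated_zero_object[OF T] by blast
  note t = Dist_triangle[OF T d]
  obtain c where c: "c \<in> hom C Q Z" "Cmp C c (Zr C X Q) = Cmp C v u"
    using Dist_morphism_completion[OF T Dist_trivial[OF T t(1) Q] d
        Idt_in_hom[OF preadditive_category[OF C] t(1)] t(4)]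
      Cmp_Idt_right[OF preadditive_category[OF C] t(4)] by metis
  then show ?thesis
    using Cmp_Zr_right[OF C c(1) t(1)] by simp
qed

text \<open>
  TR3 applied to the rotated trivial triangle \<open>W \<rightarrow> 0 \<rightarrow> \<Sigma>W\<close> and the rotation of the given
  triangle yields \<open>c\<close> with \<open>\<Sigma>g = \<Sigma>u \<circ> c\<close>; since \<open>\<Sigma>\<close> is full and faithful, \<open>c\<close> desuspends.
\<close>

lemma Dist_weak_kernel:
  assumes T: "triangulated C" and d: "(X, Y, Z, u, v, w) \<in> Dist C"
    and g: "g \<in> hom C W Y" and vg: "Cmp C v g = Zr C W Z"
  shows "\<exists>s\<in>hom C W X. g = Cmp C u s"
proof -
  have C: "preadditive C" using triangulated_preadditive[OF T] .
  have cat: "category C" using preadditive_category[OF C] .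
  have S: "additive_functor C C (ShO C) (ShA C)" using triangulated_shift[OF T] .
  obtain Q where Q: "zero_object C Q" using triangulated_zero_object[OF T] by blast
  have QO: "Q \<in> Ob C" using Q unfolding zero_object_def by blast
  note t = Dist_triangle[OF T d]
  have W: "W \<in> Ob C" using hom_objects[OF cat g] by blast
  have "Cmp C (Zr C Q Z) (Zr C W Q) = Cmp C v g"
    using Cmp_Zr_left[OF C Zr_in_hom[OF C W QO] t(3)] vg by simp
  then obtain c where c: "c \<in> hom C (ShO C W) (ShO C X)"
    "Cmp C (ShA C g) (Ng C (ShA C (Idt C W))) = Cmp C (Ng C (ShA C u)) c"
    using Dist_morphism_completion[OF T Dist_rotate[OF T Dist_trivial[OF T W Q]]
        Dist_rotate[OF T d] g Zr_in_hom[OF C QO t(3)]] by metis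
  have Sg: "ShA C g \<in> hom C (ShO C W) (ShO C Y)" using functor_hom[OF S g] .
  have Su: "ShA C u \<in> hom C (ShO C X) (ShO C Y)" using functor_hom[OF S t(4)] .
  have "Ng C (ShA C g) = Ng C (Cmp C (ShA C u) c)"
    using c(2) functor_Idt[OF S W] Cmp_Ng_right[OF C Idt_in_hom[OF cat functor_ob[OF S W]] Sg]
      Cmp_Idt_right[OF cat Sg] Cmp_Ng_left[OF C c(1) Su] by simp
  then have Sg_eq: "ShA C g = Cmp C (ShA C u) c"
    using Ng_Ng[OF C Sg] Ng_Ng[OF C Cmp_in_hom[OF cat c(1) Su]] by metis
  obtain s where s: "s \<in> hom C W X" "ShA C s = c"
    using triangulated_shift_full[OF T] c(1) W t(1) unfolding full_def by blast
  have "ShA C g = ShA C (Cmp C u s)"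
    using Sg_eq s functor_Cmp[OF S s(1) t(4)] by simp
  then have "g = Cmp C u s"
    using triangulated_shift_faithful[OF T] W t(2) g Cmp_in_hom[OF cat s(1) t(4)]
    unfolding faithful_def by blast
  then show ?thesis using s(1) by blast
qed

lemma Dist_split_epi_if_Zr:
  assumes T: "triangulated C" and d: "(X, Y, Z, u, v, w) \<in> Dist C" and v: "v = Zr C Y Z"
  shows "split_epi C u"
proof -
  have cat: "category C" using preadditive_category[OF triangulated_preadditive[OF T]] .
  note t = Dist_triangle[OF T d]
  have "Cmp C v (Idt C Y) = Zr C Y Z"
    using Cmp_Idt_right[OF cat t(5)] v by simp
  then obtain s where "s \<in> hom C Y X" "Idt C Y = Cmp C u s"
    using Dist_weak_kernel[OF T d Idt_in_hom[OF cat t(2)]] by blast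
  then show ?thesis
    using split_epiI[OF t(4)] by simp
qed

section \<open>Triangle functors\<close>

lemma triangle_functor_additive: "triangle_functor A B Fo Fa \<xi> \<Longrightarrow> additive_functor A B Fo Fa"
  unfolding triangle_functor_def by blast

lemma triangle_functor_Dist:
  "triangle_functor A B Fo Fa \<xi> \<Longrightarrow> (X, Y, Z, u, v, w) \<in> Dist A \<Longrightarrow>
    (Fo X, Fo Y, Fo Z, Fa u, Fa v, Cmp B (\<xi> X) (Fa w)) \<in> Dist B"
  unfolding triangle_functor_def by blast

text \<open>The naturality square of \<open>\<xi>\<close> at \<open>f\<close> has \<open>\<Sigma>(F f) = 0\<close> on one side, and \<open>\<xi>\<close> is invertible.\<close>

lemma triangle_functor_shift_Zr:
  assumes TA: "triangulated A" and TB: "triangulated B" and F: "triangle_functor A B Fo Fa \<xi>"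
    and f: "f \<in> hom A X Y" and Ff: "Fa f = Zr B (Fo X) (Fo Y)"
  shows "Fa (ShA A f) = Zr B (Fo (ShO A X)) (Fo (ShO A Y))"
proof -
  have A: "preadditive A" and B: "preadditive B"
    using triangulated_preadditive[OF TA] triangulated_preadditive[OF TB] .
  have FF: "additive_functor A B Fo Fa" using triangle_functor_additive[OF F] .
  have SA: "additive_functor A A (ShO A) (ShA A)" and SB: "additive_functor B B (ShO B) (ShA B)"
    using triangulated_shift[OF TA] triangulated_shift[OF TB] .
  have X: "X \<in> Ob A" and Y: "Y \<in> Ob A"
    using hom_objects[OF preadditive_category[OF A] f] by blast+
  have FX: "Fo X \<in> Ob B" and FY: "Fo Y \<in> Ob B"
    using functor_ob[OF FF X] functor_ob[OF FF Y] .
  have \<xi>X: "\<xi> X \<in> hom B (Fo (ShO A X)) (ShO B (Fo X))"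
    and \<xi>Y: "\<xi> Y \<in> hom B (Fo (ShO A Y)) (ShO B (Fo Y))" and "iso B (\<xi> Y)"
    using F X Y unfolding triangle_functor_def by blast+
  have "Cmp B (\<xi> Y) (Fa (ShA A f)) = Cmp B (ShA B (Fa f)) (\<xi> X)"
    using F f unfolding triangle_functor_def by blast
  also have "\<dots> = Zr B (Fo (ShO A X)) (ShO B (Fo Y))"
    using Ff functor_Zr[OF B B SB FX FY] Cmp_Zr_left[OF B \<xi>X functor_ob[OF SB FY]] by simp
  finally show ?thesis
    using iso_cancel_Zr[OF B \<open>iso B (\<xi> Y)\<close> \<xi>Y functor_hom[OF FF functor_hom[OF SA f]]] by simp
qed

lemma triangle_functor_faithful_reflects_split_epi:
  assumes TA: "triangulated A" and TB: "triangulated B" and F: "triangle_functor A B Fo Fa \<xi>"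
    and "faithful A Fa" and v: "v \<in> hom A X Y" and "split_epi B (Fa v)"
  shows "split_epi A v"
proof -
  have A: "preadditive A" and B: "preadditive B"
    using triangulated_preadditive[OF TA] triangulated_preadditive[OF TB] .
  have FF: "additive_functor A B Fo Fa" using triangle_functor_additive[OF F] .
  obtain Z g h where d: "(X, Y, Z, v, g, h) \<in> Dist A"
    using Dist_exists[OF TA v] .
  note t = Dist_triangle[OF TA d]
  have "Cmp B (Fa g) (Fa v) = Zr B (Fo X) (Fo Z)"
    using Dist_Cmp_Zr[OF TB triangle_functor_Dist[OF F d]] .
  then have "Fa g = Zr B (Fo Y) (Fo Z)"
    using split_epi_cancel_Zr[OF B functor_hom[OF FF v] \<open>split_epi B (Fa v)\<close> functor_hom[OF FF t(5)]]
    by simp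
  then have "g = Zr A Y Z"
    using faithful_reflects_Zr[OF \<open>faithful A Fa\<close> A B FF t(5)] by simp
  then show ?thesis
    using Dist_split_epi_if_Zr[OF TA d] by simp
qed

lemma triangle_functor_faithful_if_reflects_split_epi:
  assumes TA: "triangulated A" and TB: "triangulated B" and F: "triangle_functor A B Fo Fa \<xi>"
    and reflect: "\<forall>X\<in>Ob A. \<forall>Y\<in>Ob A. \<forall>v\<in>hom A X Y. split_epi B (Fa v) \<longrightarrow> split_epi A v"
  shows "faithful A Fa"
proof -
  have A: "preadditive A" and B: "preadditive B"
    using triangulated_preadditive[OF TA] triangulated_preadditive[OF TB] .
  have FF: "additive_functor A B Fo Fa" using triangle_functor_additive[OF F] .
  have SA: "additive_functor A A (ShO A) (ShA A)" using triangulated_shift[OF TA] .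
  show ?thesis
  proof (rule faithful_if_reflects_Zr[OF A B FF])
    fix X Y f
    assume f: "f \<in> hom A X Y" and Ff: "Fa f = Zr B (Fo X) (Fo Y)"
    obtain Z g h where "(X, Y, Z, f, g, h) \<in> Dist A"
      using Dist_exists[OF TA f] .
    then have d: "(Z, ShO A X, ShO A Y, h, Ng A (ShA A f), Ng A (ShA A g)) \<in> Dist A"
      using Dist_rotate[OF TA] by blast
    note t = Dist_triangle[OF TA d]
    have Sf: "ShA A f \<in> hom A (ShO A X) (ShO A Y)" using functor_hom[OF SA f] .
    have "Fa (Ng A (ShA A f)) = Zr B (Fo (ShO A X)) (Fo (ShO A Y))"
      using functor_Ng[OF A B FF Sf] triangle_functor_shift_Zr[OF TA TB F f Ff]
        Ng_eq_Zr_iff[OF B functor_hom[OF FF Sf]] by simp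
    then have "split_epi A h"
      using Dist_split_epi_if_Zr[OF TB triangle_functor_Dist[OF F d]] reflect t by blast
    then have "Ng A (ShA A f) = Zr A (ShO A X) (ShO A Y)"
      using split_epi_cancel_Zr[OF A t(4) _ t(5) Dist_Cmp_Zr[OF TA d]] by blast
    then have "ShA A f = Zr A (ShO A X) (ShO A Y)"
      using Ng_eq_Zr_iff[OF A Sf] by simp
    then show "f = Zr A X Y"
      using faithful_reflects_Zr[OF triangulated_shift_faithful[OF TA] A A SA f] by simp
  qed
qed

theorem proposition3:
  fixes A :: "('o1, 'm1) tri_cat" and B :: "('o2, 'm2) tri_cat"
    and Fo :: "'o1 \<Rightarrow> 'o2" and Fa :: "'m1 \<Rightarrow> 'm2" and \<xi> :: "'o1 \<Rightarrow> 'm2"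
  assumes "triangulated A" and "triangulated B"
    and "triangle_functor A B Fo Fa \<xi>"
  shows "faithful A Fa \<longleftrightarrow>
    (\<forall>X\<in>Ob A. \<forall>Y\<in>Ob A. \<forall>v\<in>hom A X Y. split_epi B (Fa v) \<longrightarrow> split_epi A v)"
  using triangle_functor_faithful_reflects_split_epi[OF assms]
    triangle_functor_faithful_if_reflects_split_epi[OF assms]
  by blast

end
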